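(* Let $\mathbb{K}$ be a field, $R=\mathbb{K}\langle x,y\rangle/(xy-1)$, $I=\langle 1-yx\rangle$ the socle of $R$, and $S_n=Rf_n$ with $f_n=y^{n-1}x^{n-1}-y^nx^n$ for $n\ge1$. If $H$ is a left ideal of $R$, then either $H$ is semisimple (and so contained in $I$), or there is a unique monic polynomial $p(x)\in H\cap\mathbb{K}[x]$ of minimal degree (among nonzero polynomials in $x$ lying in $H$), and $H=\Sigma(H)\oplus Rp(x)$ for a uniquely determined left submodule $\Sigma(H)\subseteq S_1\oplus\cdots\oplus S_{\deg(p)}$.
   Context: $I=\bigoplus_{n\ge1}S_n$ as left modules, each $S_n$ being simple and isomorphic to $S_1$. *)

theory Defs
  imports "HOL-Library.Poly_Mapping" "HOL-Computational_Algebra.Polynomial"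
begin

text \<open>Concrete model of the Jacobson algebra R = K<x,y>/(xy - 1).
  R has K-basis the monomials y^i x^j (i,j \<ge> 0) (normal forms modulo xy = 1);
  the monomial y^i x^j is encoded as the key (i,j).  Addition is the pointwise one
  of poly_mapping; multiplication is the bilinear extension of the bicyclic
  monoid product: (y^i x^j)(y^k x^l) = y^i x^(j-k+l) if k \<le> j, and
  y^(i+k-j) x^l otherwise.\<close>

definition bmul :: "nat \<times> nat \<Rightarrow> nat \<times> nat \<Rightarrow> nat \<times> nat" where
  "bmul p q = (case p of (i, j) \<Rightarrow> case q of (k, l) \<Rightarrow>
      if k \<le> j then (i, j - k + l) else (i + k - j, l))"

definition jmult :: "((nat \<times> nat) \<Rightarrow>\<^sub>0 'k::field) \<Rightarrow> ((nat \<times> nat) \<Rightarrow>\<^sub>0 'k) \<Rightarrow> ((nat \<times> nat) \<Rightarrow>\<^sub>0 'k)" where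
  "jmult f g = (\<Sum>p\<in>Poly_Mapping.keys f. \<Sum>q\<in>Poly_Mapping.keys g.
      Poly_Mapping.single (bmul p q) (Poly_Mapping.lookup f p * Poly_Mapping.lookup g q))"

definition mon :: "nat \<Rightarrow> nat \<Rightarrow> ((nat \<times> nat) \<Rightarrow>\<^sub>0 'k::field)" where
  "mon i j = Poly_Mapping.single (i, j) 1"

definition polyx :: "'k::field poly \<Rightarrow> ((nat \<times> nat) \<Rightarrow>\<^sub>0 'k)" where
  "polyx p = (\<Sum>j\<le>degree p. Poly_Mapping.single (0, j) (coeff p j))"

definition lideal :: "((nat \<times> nat) \<Rightarrow>\<^sub>0 'k::field) set \<Rightarrow> bool" where
  "lideal H \<longleftrightarrow> 0 \<in> H \<and> (\<forall>a\<in>H. \<forall>b\<in>H. a + b \<in> H) \<and> (\<forall>r. \<forall>a\<in>H. jmult r a \<in> H)"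

definition tideal :: "((nat \<times> nat) \<Rightarrow>\<^sub>0 'k::field) set \<Rightarrow> bool" where
  "tideal J \<longleftrightarrow> lideal J \<and> (\<forall>r. \<forall>a\<in>J. jmult a r \<in> J)"

definition simple_lideal :: "((nat \<times> nat) \<Rightarrow>\<^sub>0 'k::field) set \<Rightarrow> bool" where
  "simple_lideal S \<longleftrightarrow> lideal S \<and> S \<noteq> {0} \<and>
     (\<forall>T. lideal T \<and> T \<subseteq> S \<longrightarrow> T = {0} \<or> T = S)"

definition semisimple :: "((nat \<times> nat) \<Rightarrow>\<^sub>0 'k::field) set \<Rightarrow> bool" where
  "semisimple H \<longleftrightarrow> lideal H \<and>
     (\<forall>h\<in>H. \<exists>n (g :: nat \<Rightarrow> (nat \<times> nat) \<Rightarrow>\<^sub>0 'k) (S :: nat \<Rightarrow> ((nat \<times> nat) \<Rightarrow>\<^sub>0 'k) set).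
        (\<forall>i<n. simple_lideal (S i) \<and> S i \<subseteq> H \<and> g i \<in> S i) \<and> h = (\<Sum>i<n. g i))"

definition lprinc :: "((nat \<times> nat) \<Rightarrow>\<^sub>0 'k::field) \<Rightarrow> ((nat \<times> nat) \<Rightarrow>\<^sub>0 'k) set" where
  "lprinc a = {jmult r a | r. True}"

definition fn :: "nat \<Rightarrow> ((nat \<times> nat) \<Rightarrow>\<^sub>0 'k::field)" where
  "fn n = mon (n - 1) (n - 1) - mon n n"

definition Sn :: "nat \<Rightarrow> ((nat \<times> nat) \<Rightarrow>\<^sub>0 'k::field) set" where
  "Sn n = lprinc (fn n)"

definition Ssum :: "nat \<Rightarrow> ((nat \<times> nat) \<Rightarrow>\<^sub>0 'k::field) set" where
  "Ssum d = {(\<Sum>n\<in>{1..d}. s n) | s. \<forall>n\<in>{1..d}. s n \<in> Sn n}"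

definition socle :: "((nat \<times> nat) \<Rightarrow>\<^sub>0 'k::field) set" where
  "socle = \<Inter>{J. tideal J \<and> mon 0 0 - mon 1 1 \<in> J}"

definition idirect :: "((nat \<times> nat) \<Rightarrow>\<^sub>0 'k::field) set \<Rightarrow> _ set \<Rightarrow> _ set \<Rightarrow> bool" where
  "idirect H A B \<longleftrightarrow> H = {a + b | a b. a \<in> A \<and> b \<in> B} \<and> A \<inter> B = {0}"

definition minpoly_in :: "((nat \<times> nat) \<Rightarrow>\<^sub>0 'k::field) set \<Rightarrow> 'k poly \<Rightarrow> bool" where
  "minpoly_in H p \<longleftrightarrow> p \<noteq> 0 \<and> lead_coeff p = 1 \<and> polyx p \<in> H \<and>
     (\<forall>q. q \<noteq> 0 \<and> polyx q \<in> H \<longrightarrow> degree p \<le> degree q)"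

end

theory Submission
  imports Defs
begin

text \<open>Sending x to x and y to 1/x maps R onto the Laurent polynomials. In the monomial basis
  y^i x^j (row i, column j) this map only sees the sums of the coefficients along the diagonals
  j - i = const, and its kernel is the socle I, spanned by the matrix units e(i,j) = y^i (1 - yx) x^j.

  If H lies in I, every h in H with rows at most N is the sum of the e(i,0) e(0,i) h for i < N,
  and every nonzero e(i,0) w generates a simple module, because a nonzero element of
  R e(0,0) = S_1 generates e(0,0). Hence H is semisimple, and it lies in every two-sided ideal
  containing e(0,0) = 1 - yx.

  Otherwise some h in H has nonzero image, and for N beyond its rows x^N h is a nonzero
  polynomial in x, so H meets K[x] in K[x] p for a monic p of degree d. For h in H,
  h - y^N x^N h lies in I while y^N x^N h lies in R p, and I is contained in
  S_1 + ... + S_d + R p because e(i,j) with j \<ge> d differs from e(i,j-d) p by matrix units of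
  smaller column. The sum is direct: r p lies in I only if r does, and then the largest column
  index of r p exceeds d, whereas S_1 + ... + S_d lives in the columns \<le> d.\<close>

type_synonym 'k R = "(nat \<times> nat) \<Rightarrow>\<^sub>0 'k"

lemma lookup_sum_single:
  "Poly_Mapping.lookup (\<Sum>x\<in>A. Poly_Mapping.single (f x) (v x)) y = (\<Sum>x\<in>A. if f x = y then v x else 0)"
  by (simp add: lookup_sum lookup_single when_def)

lemma poly_mapping_sum_single: "f = (\<Sum>p\<in>Poly_Mapping.keys f. Poly_Mapping.single p (Poly_Mapping.lookup f p))"
  by (rule poly_mapping_eqI) (auto simp: lookup_sum_single in_keys_iff sum.delta)

lemma jmult_keys_superset:
  assumes "finite A" "Poly_Mapping.keys f \<subseteq> A" "finite B" "Poly_Mapping.keys g \<subseteq> B"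
  shows "jmult f g = (\<Sum>p\<in>A. \<Sum>q\<in>B. Poly_Mapping.single (bmul p q) (Poly_Mapping.lookup f p * Poly_Mapping.lookup g q))"
proof -
  have "jmult f g = (\<Sum>p\<in>Poly_Mapping.keys f. \<Sum>q\<in>B. Poly_Mapping.single (bmul p q) (Poly_Mapping.lookup f p * Poly_Mapping.lookup g q))"
    unfolding jmult_def
    by (rule sum.cong[OF refl], rule sum.mono_neutral_left) (use assms in \<open>auto simp: in_keys_iff\<close>)
  also have "\<dots> = (\<Sum>p\<in>A. \<Sum>q\<in>B. Poly_Mapping.single (bmul p q) (Poly_Mapping.lookup f p * Poly_Mapping.lookup g q))"
    by (rule sum.mono_neutral_left) (use assms in \<open>auto simp: in_keys_iff\<close>)
  finally show ?thesis .
qed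

lemma jmult_add_left: "jmult (f + f') g = jmult f g + jmult f' g"
  using keys_add[of f f']
  by (subst (1 2 3) jmult_keys_superset[where A = "Poly_Mapping.keys f \<union> Poly_Mapping.keys f'" and B = "Poly_Mapping.keys g"])
     (auto simp: lookup_add distrib_right single_add sum.distrib)

lemma jmult_add_right: "jmult f (g + g') = jmult f g + jmult f g'"
  using keys_add[of g g']
  by (subst (1 2 3) jmult_keys_superset[where B = "Poly_Mapping.keys g \<union> Poly_Mapping.keys g'" and A = "Poly_Mapping.keys f"])
     (auto simp: lookup_add distrib_left single_add sum.distrib)

lemma jmult_zero_left [simp]: "jmult 0 g = 0"
  by (simp add: jmult_def)

lemma jmult_zero_right [simp]: "jmult f 0 = 0"
  by (simp add: jmult_def)

lemma jmult_diff_left: "jmult (f - f') g = jmult f g - jmult f' g"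
  by (metis add_diff_cancel_right' diff_add_cancel jmult_add_left)

lemma jmult_diff_right: "jmult f (g - g') = jmult f g - jmult f g'"
  by (metis add_diff_cancel_right' diff_add_cancel jmult_add_right)

lemma jmult_sum_left: "jmult (\<Sum>i\<in>I. f i) g = (\<Sum>i\<in>I. jmult (f i) g)"
  by (induction I rule: infinite_finite_induct) (auto simp: jmult_add_left)

lemma jmult_sum_right: "jmult g (\<Sum>i\<in>I. f i) = (\<Sum>i\<in>I. jmult g (f i))"
  by (induction I rule: infinite_finite_induct) (auto simp: jmult_add_right)

lemma jmult_single_single:
  "jmult (Poly_Mapping.single p a) (Poly_Mapping.single q b) = Poly_Mapping.single (bmul p q) (a * b)"
  by (subst jmult_keys_superset[where A = "{p}" and B = "{q}"]) auto

lemma jmult_single_left: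
  "jmult (Poly_Mapping.single p a) g = (\<Sum>q\<in>Poly_Mapping.keys g. Poly_Mapping.single (bmul p q) (a * Poly_Mapping.lookup g q))"
  by (subst jmult_keys_superset[where A = "{p}" and B = "Poly_Mapping.keys g"]) auto

lemma jmult_single_right:
  "jmult f (Poly_Mapping.single q b) = (\<Sum>p\<in>Poly_Mapping.keys f. Poly_Mapping.single (bmul p q) (Poly_Mapping.lookup f p * b))"
  by (subst jmult_keys_superset[where B = "{q}" and A = "Poly_Mapping.keys f"]) auto

lemma bmul_assoc: "bmul (bmul p q) r = bmul p (bmul q r)"
  by (cases p; cases q; cases r) (auto simp: bmul_def)

lemma jmult_assoc: "jmult (jmult f g) h = jmult f (jmult g h)"
proof -
  let ?F = "Poly_Mapping.keys f" and ?G = "Poly_Mapping.keys g" and ?H = "Poly_Mapping.keys h"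
  let ?f = "Poly_Mapping.lookup f" and ?g = "Poly_Mapping.lookup g" and ?h = "Poly_Mapping.lookup h"
  have "jmult (jmult f g) h = jmult (\<Sum>p\<in>?F. \<Sum>q\<in>?G. Poly_Mapping.single (bmul p q) (?f p * ?g q))
       (\<Sum>r\<in>?H. Poly_Mapping.single r (?h r))"
    by (simp add: jmult_def flip: poly_mapping_sum_single)
  also have "\<dots> = (\<Sum>p\<in>?F. \<Sum>q\<in>?G. \<Sum>r\<in>?H. Poly_Mapping.single (bmul (bmul p q) r) (?f p * ?g q * ?h r))"
    by (simp only: jmult_sum_left) (simp add: jmult_sum_right jmult_single_single)
  also have "\<dots> = (\<Sum>p\<in>?F. \<Sum>q\<in>?G. \<Sum>r\<in>?H. Poly_Mapping.single (bmul p (bmul q r)) (?f p * (?g q * ?h r)))"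
    by (simp add: bmul_assoc mult.assoc)
  also have "\<dots> = jmult (\<Sum>p\<in>?F. Poly_Mapping.single p (?f p)) (\<Sum>q\<in>?G. \<Sum>r\<in>?H. Poly_Mapping.single (bmul q r) (?g q * ?h r))"
    by (simp only: jmult_sum_left) (simp add: jmult_sum_right jmult_single_single)
  also have "\<dots> = jmult f (jmult g h)"
    by (simp add: jmult_def flip: poly_mapping_sum_single)
  finally show ?thesis .
qed

definition rscale :: "'k::field \<Rightarrow> 'k R \<Rightarrow> 'k R" where
  "rscale c a = jmult (Poly_Mapping.single (0,0) c) a"

lemma bmul_0_0_left [simp]: "bmul (0,0) q = q"
  by (cases q) (simp add: bmul_def)

lemma lookup_rscale [simp]: "Poly_Mapping.lookup (rscale c a) x = c * Poly_Mapping.lookup a x"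
  unfolding rscale_def jmult_single_left lookup_sum_single
  by (cases "x \<in> Poly_Mapping.keys a") (auto simp: sum.delta in_keys_iff)

lemma rscale_minus_one: "rscale (-1) a = - a"
  by (rule poly_mapping_eqI) simp

lemma rscale_one [simp]: "rscale 1 a = a"
  by (rule poly_mapping_eqI) simp

lemma jmult_mon_0_0 [simp]: "jmult (mon 0 0) a = a"
  using rscale_one unfolding rscale_def mon_def .

lemma lideal_0: "lideal H \<Longrightarrow> 0 \<in> H"
  by (simp add: lideal_def)

lemma lideal_add: "lideal H \<Longrightarrow> a \<in> H \<Longrightarrow> b \<in> H \<Longrightarrow> a + b \<in> H"
  by (simp add: lideal_def)

lemma lideal_mult: "lideal H \<Longrightarrow> a \<in> H \<Longrightarrow> jmult r a \<in> H"
  by (simp add: lideal_def)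

lemma lideal_rscale: "lideal H \<Longrightarrow> a \<in> H \<Longrightarrow> rscale c a \<in> H"
  by (simp add: lideal_def rscale_def)

lemma lideal_diff: "lideal H \<Longrightarrow> a \<in> H \<Longrightarrow> b \<in> H \<Longrightarrow> a - b \<in> H"
  using lideal_add[of H a "rscale (-1) b"] lideal_rscale[of H b "-1"] by (simp add: rscale_minus_one)

lemma lideal_sum: "lideal H \<Longrightarrow> (\<And>i. i \<in> I \<Longrightarrow> f i \<in> H) \<Longrightarrow> (\<Sum>i\<in>I. f i) \<in> H"
  by (induction I rule: infinite_finite_induct) (auto intro: lideal_add lideal_0)

lemma lideal_Int: "lideal A \<Longrightarrow> lideal B \<Longrightarrow> lideal (A \<inter> B)"
  by (simp add: lideal_def)

lemma lprinc_lideal: "lideal (lprinc a)"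
  unfolding lideal_def lprinc_def
  by (auto simp flip: jmult_add_left jmult_assoc intro: exI[of _ 0])

lemma mem_lprinc_self: "a \<in> lprinc a"
  unfolding lprinc_def by (metis (mono_tags) CollectI jmult_mon_0_0)

lemma lprinc_subset: "lideal H \<Longrightarrow> a \<in> H \<Longrightarrow> lprinc a \<subseteq> H"
  unfolding lprinc_def by (auto intro: lideal_mult)

definition lsum :: "'k::field R set \<Rightarrow> 'k R set \<Rightarrow> 'k R set" where
  "lsum A B = {a + b | a b. a \<in> A \<and> b \<in> B}"

lemma lsum_lideal:
  assumes "lideal A" "lideal B"
  shows "lideal (lsum A B)"
  unfolding lideal_def lsum_def
proof (intro conjI ballI allI)
  show "0 \<in> {a + b |a b. a \<in> A \<and> b \<in> B}"
    using assms by (auto intro!: exI[of _ 0] lideal_0)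
next
  fix u v assume "u \<in> {a + b |a b. a \<in> A \<and> b \<in> B}" "v \<in> {a + b |a b. a \<in> A \<and> b \<in> B}"
  then obtain a b a' b' where "u = a + b" "v = a' + b'" "a \<in> A" "a' \<in> A" "b \<in> B" "b' \<in> B"
    by blast
  then show "u + v \<in> {a + b |a b. a \<in> A \<and> b \<in> B}"
    using assms by (intro CollectI exI[of _ "a + a'"] exI[of _ "b + b'"]) (auto simp: lideal_add ac_simps)
next
  fix r u assume "u \<in> {a + b |a b. a \<in> A \<and> b \<in> B}"
  then obtain a b where "u = a + b" "a \<in> A" "b \<in> B" by blast
  then show "jmult r u \<in> {a + b |a b. a \<in> A \<and> b \<in> B}"
    using assms by (intro CollectI exI[of _ "jmult r a"] exI[of _ "jmult r b"]) (auto simp: lideal_mult jmult_add_right)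
qed

lemma idirect_iff_lsum: "idirect H A B \<longleftrightarrow> H = lsum A B \<and> A \<inter> B = {0}"
  by (simp add: idirect_def lsum_def)

lemma idirect_complement_unique:
  assumes "idirect H A B" "A \<subseteq> C" "lideal C" "C \<inter> B = {0}" "0 \<in> B"
  shows "A = H \<inter> C"
proof (intro set_eqI iffI)
  have H: "H = {a + b |a b. a \<in> A \<and> b \<in> B}" using assms(1) by (simp add: idirect_def)
  fix x
  show "x \<in> H \<inter> C" if "x \<in> A"
  proof -
    have "x + 0 \<in> H" using H that assms(5) by blast
    then show ?thesis using that assms(2) by auto
  qed
  show "x \<in> A" if x: "x \<in> H \<inter> C"
  proof -
    obtain a b where ab: "x = a + b" "a \<in> A" "b \<in> B" using H x by blast
    have "b = x - a" using ab by simp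
    also have "\<dots> \<in> C" using x ab(2) assms(2,3) by (intro lideal_diff) auto
    finally have "b = 0" using assms(4) ab(3) by blast
    then show ?thesis using ab by simp
  qed
qed

subsection \<open>Diagonal coefficient sums and the socle\<close>

definition diag :: "nat \<times> nat \<Rightarrow> int" where
  "diag q = int (snd q) - int (fst q)"

definition diag_coeff :: "int \<Rightarrow> 'k::field R \<Rightarrow> 'k" where
  "diag_coeff k a = (\<Sum>q\<in>Poly_Mapping.keys a. if diag q = k then Poly_Mapping.lookup a q else 0)"

definition diag_kernel :: "'k::field R set" where
  "diag_kernel = {a. \<forall>k. diag_coeff k a = 0}"

definition diag_kernel_upto :: "nat \<Rightarrow> 'k::field R set" where
  "diag_kernel_upto d = {a \<in> diag_kernel. \<forall>q\<in>Poly_Mapping.keys a. snd q \<le> d}"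

lemma diag_coeff_keys_superset:
  "finite A \<Longrightarrow> Poly_Mapping.keys a \<subseteq> A \<Longrightarrow>
   diag_coeff k a = (\<Sum>q\<in>A. if diag q = k then Poly_Mapping.lookup a q else 0)"
  unfolding diag_coeff_def by (rule sum.mono_neutral_left) (auto simp: in_keys_iff)

lemma diag_coeff_add: "diag_coeff k (a + b) = diag_coeff k a + diag_coeff k b"
  using keys_add[of a b]
  by (subst (1 2 3) diag_coeff_keys_superset[where A = "Poly_Mapping.keys a \<union> Poly_Mapping.keys b"])
     (auto simp: lookup_add sum.distrib[symmetric] intro!: sum.cong)

lemma diag_coeff_zero [simp]: "diag_coeff k 0 = 0"
  by (simp add: diag_coeff_def)

lemma diag_coeff_diff: "diag_coeff k (a - b) = diag_coeff k a - diag_coeff k b"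
  by (metis add_diff_cancel_right' diag_coeff_add diff_add_cancel)

lemma diag_coeff_sum: "diag_coeff k (\<Sum>i\<in>I. f i) = (\<Sum>i\<in>I. diag_coeff k (f i))"
  by (induction I rule: infinite_finite_induct) (auto simp: diag_coeff_add)

lemma diag_coeff_single: "diag_coeff k (Poly_Mapping.single q c) = (if diag q = k then c else 0)"
  by (subst diag_coeff_keys_superset[where A = "{q}"]) auto

lemma diag_coeff_rscale: "diag_coeff k (rscale c a) = c * diag_coeff k a"
  unfolding diag_coeff_def
  by (rule trans[OF sum.mono_neutral_left[where T = "Poly_Mapping.keys a"]])
     (auto simp: in_keys_iff sum_distrib_left intro!: sum.cong)

lemma diag_kernel_add: "a \<in> diag_kernel \<Longrightarrow> b \<in> diag_kernel \<Longrightarrow> a + b \<in> diag_kernel"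
  by (simp add: diag_kernel_def diag_coeff_add)

lemma diag_kernel_rscale: "a \<in> diag_kernel \<Longrightarrow> rscale c a \<in> diag_kernel"
  by (simp add: diag_kernel_def diag_coeff_rscale)

lemma diag_kernel_upto_add: "a \<in> diag_kernel_upto d \<Longrightarrow> b \<in> diag_kernel_upto d \<Longrightarrow> a + b \<in> diag_kernel_upto d"
  using keys_add[of a b] by (auto simp: diag_kernel_upto_def diag_kernel_add)

lemma diag_kernel_upto_sum:
  "(\<And>i. i \<in> I \<Longrightarrow> f i \<in> diag_kernel_upto d) \<Longrightarrow> (\<Sum>i\<in>I. f i) \<in> diag_kernel_upto d"
proof (induction I rule: infinite_finite_induct)
  case (insert x F)
  then show ?case by (simp add: diag_kernel_upto_add)
qed (simp_all add: diag_kernel_upto_def diag_kernel_def)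

lemma diag_kernel_upto_mono: "a \<in> diag_kernel_upto d \<Longrightarrow> d \<le> d' \<Longrightarrow> a \<in> diag_kernel_upto d'"
  by (auto simp: diag_kernel_upto_def)

lemma single_diff_single_in_diag_kernel_upto:
  assumes "P = P' \<or> diag P = diag P' \<and> snd P \<le> d \<and> snd P' \<le> d"
  shows "Poly_Mapping.single P c - Poly_Mapping.single P' c \<in> diag_kernel_upto d"
proof (cases "P = P'")
  case False
  have "Poly_Mapping.keys (Poly_Mapping.single P c - Poly_Mapping.single P' c) \<subseteq> {P, P'}"
    using keys_diff[of "Poly_Mapping.single P c" "Poly_Mapping.single P' c"] by (auto split: if_splits)
  then show ?thesis
    using assms False by (auto simp: diag_kernel_upto_def diag_kernel_def diag_coeff_diff diag_coeff_single)
qed (simp add: diag_kernel_upto_def diag_kernel_def)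

text \<open>Each diagonal meets the boundary of the quadrant, where i = 0 or j = 0, in a single point.\<close>

lemma diag_kernel_has_interior_key:
  assumes "a \<in> diag_kernel" "a \<noteq> 0"
  shows "\<exists>q\<in>Poly_Mapping.keys a. fst q \<ge> 1 \<and> snd q \<ge> 1"
proof (rule ccontr)
  assume boundary: "\<not> ?thesis"
  obtain q0 where q0: "q0 \<in> Poly_Mapping.keys a" using assms(2) by (metis all_not_in_conv keys_eq_empty)
  have "q = q0" if "q \<in> Poly_Mapping.keys a" "diag q = diag q0" for q
  proof -
    have "fst q = 0 \<or> snd q = 0" "fst q0 = 0 \<or> snd q0 = 0" using boundary that(1) q0 by force+
    then show ?thesis using that(2) unfolding diag_def by (cases q; cases q0) auto
  qed
  then have "diag_coeff (diag q0) a = (\<Sum>q\<in>Poly_Mapping.keys a. if q = q0 then Poly_Mapping.lookup a q else 0)"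
    unfolding diag_coeff_def by (intro sum.cong) auto
  also have "\<dots> \<noteq> 0" using q0 by (simp add: sum.delta in_keys_iff)
  finally show False using assms(1) by (simp add: diag_kernel_def)
qed

definition row_bound :: "'k::field R \<Rightarrow> nat" where
  "row_bound h = Max (insert 0 (fst ` Poly_Mapping.keys h))"

lemma fst_le_row_bound: "q \<in> Poly_Mapping.keys h \<Longrightarrow> fst q \<le> row_bound h"
  unfolding row_bound_def by (rule Max_ge) auto

lemma jmult_mon_left:
  assumes "\<forall>q\<in>Poly_Mapping.keys h. fst q \<le> b"
  shows "jmult (mon a b) h = (\<Sum>q\<in>Poly_Mapping.keys h. Poly_Mapping.single (a, b - fst q + snd q) (Poly_Mapping.lookup h q))"
  unfolding mon_def jmult_single_left
  by (rule sum.cong) (use assms in \<open>auto simp: bmul_def split: prod.splits\<close>)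

lemma diag_coeff_jmult_mon:
  assumes "\<forall>q\<in>Poly_Mapping.keys h. fst q \<le> b"
  shows "diag_coeff k (jmult (mon a b) h) = diag_coeff (k - int b + int a) h"
proof -
  have "diag_coeff k (jmult (mon a b) h) = (\<Sum>q\<in>Poly_Mapping.keys h.
      if diag (a, b - fst q + snd q) = k then Poly_Mapping.lookup h q else 0)"
    by (simp only: jmult_mon_left[OF assms] diag_coeff_sum diag_coeff_single)
  also have "\<dots> = diag_coeff (k - int b + int a) h"
    unfolding diag_coeff_def by (rule sum.cong) (use assms in \<open>auto simp: diag_def\<close>)
  finally show ?thesis .
qed

lemma lookup_jmult_xpow:
  assumes "\<forall>q\<in>Poly_Mapping.keys h. fst q \<le> N"
  shows "Poly_Mapping.lookup (jmult (mon 0 N) h) (i,j) = (if i = 0 then diag_coeff (int j - int N) h else 0)"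
  unfolding jmult_mon_left[OF assms] lookup_sum_single diag_coeff_def
  by (auto intro!: sum.cong simp: diag_def) (use assms in force)+

lemma jmult_xpow_diag_kernel_eq_0:
  "\<forall>q\<in>Poly_Mapping.keys h. fst q \<le> N \<Longrightarrow> h \<in> diag_kernel \<Longrightarrow> jmult (mon 0 N) h = 0"
  by (rule poly_mapping_eqI) (auto simp: lookup_jmult_xpow diag_kernel_def)

lemma diff_jmult_mon_diag_kernel:
  "\<forall>q\<in>Poly_Mapping.keys h. fst q \<le> N \<Longrightarrow> h - jmult (mon N N) h \<in> diag_kernel"
  by (simp add: diag_kernel_def diag_coeff_diff diag_coeff_jmult_mon)

lemma lookup_polyx: "Poly_Mapping.lookup (polyx p) q = (if fst q = 0 then coeff p (snd q) else 0)"
  unfolding polyx_def lookup_sum_single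
  by (cases q) (auto simp: sum.delta coeff_eq_0 intro: sum.neutral)

lemma polyx_diff: "polyx (a - b) = polyx a - polyx b"
  by (rule poly_mapping_eqI) (simp add: lookup_polyx lookup_minus)

lemma polyx_smult: "polyx (smult c a) = rscale c (polyx a)"
  by (rule poly_mapping_eqI) (simp add: lookup_polyx)

lemma polyx_0 [simp]: "polyx 0 = 0"
  by (rule poly_mapping_eqI) (simp add: lookup_polyx)

lemma polyx_add: "polyx (a + b) = polyx a + polyx b"
  by (rule poly_mapping_eqI) (simp add: lookup_polyx lookup_add)

lemma polyx_sum: "polyx (\<Sum>i\<in>I. f i) = (\<Sum>i\<in>I. polyx (f i))"
  by (induction I rule: infinite_finite_induct) (auto simp: polyx_add)

lemma polyx_eq_0_iff [simp]: "polyx a = 0 \<longleftrightarrow> a = 0"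
proof
  assume "polyx a = 0"
  then have "coeff a j = 0" for j by (metis fst_conv lookup_polyx lookup_zero snd_conv)
  then show "a = 0" by (simp add: poly_eq_iff)
qed simp

lemma jmult_single_row0_polyx:
  "jmult (Poly_Mapping.single (0,m) c) (polyx b) = polyx (monom c m * b)"
proof (rule poly_mapping_eqI)
  fix q :: "nat \<times> nat"
  obtain i j where q: "q = (i,j)" by (cases q)
  have "jmult (Poly_Mapping.single (0,m) c) (polyx b) =
     (\<Sum>n\<le>degree b. Poly_Mapping.single (0, m + n) (c * coeff b n))"
    unfolding polyx_def jmult_sum_right jmult_single_single by (simp add: bmul_def)
  then have "Poly_Mapping.lookup (jmult (Poly_Mapping.single (0,m) c) (polyx b)) q =
     (\<Sum>n\<le>degree b. if (0, m + n) = (i,j) then c * coeff b n else 0)"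
    by (simp add: lookup_sum_single q)
  also have "\<dots> = (if i = 0 \<and> m \<le> j then c * coeff b (j - m) else 0)"
  proof (cases "i = 0 \<and> m \<le> j")
    case True
    then have "(\<Sum>n\<le>degree b. if (0, m + n) = (i,j) then c * coeff b n else 0) =
       (\<Sum>n\<le>degree b. if n = j - m then c * coeff b n else 0)"
      by (intro sum.cong) auto
    also have "\<dots> = c * coeff b (j - m)" by (auto simp: sum.delta coeff_eq_0)
    finally show ?thesis using True by simp
  qed (auto intro: sum.neutral)
  also have "\<dots> = Poly_Mapping.lookup (polyx (monom c m * b)) q"
    by (simp add: q lookup_polyx coeff_monom_mult)
  finally show "Poly_Mapping.lookup (jmult (Poly_Mapping.single (0,m) c) (polyx b)) q =
      Poly_Mapping.lookup (polyx (monom c m * b)) q" .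
qed

lemma polyx_mult: "polyx (a * b) = jmult (polyx a) (polyx b)"
proof -
  have "polyx (a * b) = polyx ((\<Sum>i\<le>degree a. monom (coeff a i) i) * b)"
    by (simp add: poly_as_sum_of_monoms)
  also have "\<dots> = (\<Sum>i\<le>degree a. jmult (Poly_Mapping.single (0,i) (coeff a i)) (polyx b))"
    by (simp add: sum_distrib_right polyx_sum jmult_single_row0_polyx)
  also have "\<dots> = jmult (polyx a) (polyx b)"
    by (simp add: polyx_def jmult_sum_left)
  finally show ?thesis .
qed

lemma polyx_if_keys_row0:
  assumes "\<forall>q\<in>Poly_Mapping.keys a. fst q = 0"
  shows "a = polyx (\<Sum>q\<in>Poly_Mapping.keys a. monom (Poly_Mapping.lookup a q) (snd q))"
proof (rule poly_mapping_eqI)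
  fix q :: "nat \<times> nat"
  obtain i j where q: "q = (i,j)" by (cases q)
  show "Poly_Mapping.lookup a q = Poly_Mapping.lookup (polyx (\<Sum>q\<in>Poly_Mapping.keys a. monom (Poly_Mapping.lookup a q) (snd q))) q"
  proof (cases "i = 0")
    case True
    have "(\<Sum>x\<in>Poly_Mapping.keys a. if snd x = j then Poly_Mapping.lookup a x else 0) =
          (\<Sum>x\<in>Poly_Mapping.keys a. if x = (0,j) then Poly_Mapping.lookup a x else 0)"
      by (rule sum.cong) (use assms in auto)
    also have "\<dots> = Poly_Mapping.lookup a (0,j)"
      by (auto simp: sum.delta in_keys_iff)
    finally show ?thesis
      by (simp add: q True lookup_polyx coeff_sum coeff_monom eq_commute[of "snd _"])
  next
    case False
    then have "q \<notin> Poly_Mapping.keys a" using assms q by auto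
    then show ?thesis by (simp add: q False lookup_polyx in_keys_iff)
  qed
qed

lemma jmult_xpow_eq_polyx:
  assumes "\<forall>q\<in>Poly_Mapping.keys h. fst q \<le> N"
  obtains v where "jmult (mon 0 N) h = polyx v"
  using polyx_if_keys_row0 lookup_jmult_xpow[OF assms]
  by (metis (no_types, lifting) in_keys_iff prod.collapse)

lemma lideal_has_polyx_if_not_subset_diag_kernel:
  assumes "lideal H" "h \<in> H" "h \<notin> diag_kernel"
  shows "\<exists>v. v \<noteq> 0 \<and> polyx v \<in> H"
proof -
  let ?N = "row_bound h"
  have rows: "\<forall>q\<in>Poly_Mapping.keys h. fst q \<le> ?N" by (simp add: fst_le_row_bound)
  obtain v where v: "jmult (mon 0 ?N) h = polyx v" using jmult_xpow_eq_polyx[OF rows] .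
  obtain k where "diag_coeff k h \<noteq> 0" using assms(3) by (auto simp: diag_kernel_def)
  then have "diag_coeff (k + int ?N) (polyx v) \<noteq> 0"
    by (simp flip: v add: diag_coeff_jmult_mon[OF rows])
  then have "v \<noteq> 0" by auto
  moreover have "polyx v \<in> H" using assms(1,2) by (simp flip: v add: lideal_mult)
  ultimately show ?thesis by blast
qed

lemma minpoly_in_exists:
  assumes H: "lideal H" and "v \<noteq> 0" "polyx v \<in> H"
  shows "\<exists>p. minpoly_in H p"
proof -
  define n where "n = (LEAST n. \<exists>q. q \<noteq> 0 \<and> polyx q \<in> H \<and> degree q = n)"
  obtain q0 where q0: "q0 \<noteq> 0" "polyx q0 \<in> H" "degree q0 = n"
    using LeastI[of "\<lambda>n. \<exists>q. q \<noteq> 0 \<and> polyx q \<in> H \<and> degree q = n" "degree v"] assms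
    unfolding n_def by blast
  have "n \<le> degree r" if "r \<noteq> 0" "polyx r \<in> H" for r
    unfolding n_def by (rule Least_le) (use that in auto)
  then have "minpoly_in H (smult (inverse (lead_coeff q0)) q0)"
    unfolding minpoly_in_def using q0 by (auto simp: polyx_smult lideal_rscale[OF H])
  then show ?thesis by blast
qed

lemma minpoly_in_dvd:
  assumes H: "lideal H" and p: "minpoly_in H p" and q: "polyx q \<in> H"
  shows "p dvd q"
proof (rule ccontr)
  assume "\<not> p dvd q"
  then have nz: "q mod p \<noteq> 0" by (simp add: mod_eq_0_iff_dvd)
  have p0: "p \<noteq> 0" and pH: "polyx p \<in> H" using p by (auto simp: minpoly_in_def)
  have "polyx (q mod p) = polyx q - jmult (polyx (q div p)) (polyx p)"
    by (metis polyx_mult polyx_diff div_mult_mod_eq add_diff_cancel_left')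
  also have "\<dots> \<in> H" using H q pH by (intro lideal_diff lideal_mult)
  finally have "degree p \<le> degree (q mod p)" using p nz by (auto simp: minpoly_in_def)
  then show False using degree_mod_less[OF p0, of q] nz by simp
qed

lemma minpoly_in_unique:
  assumes "lideal H" "minpoly_in H p" "minpoly_in H q"
  shows "q = p"
proof (rule ccontr)
  assume "q \<noteq> p"
  have deg: "degree p = degree q"
    using assms(2,3) by (auto simp: minpoly_in_def intro: antisym)
  have "coeff (p - q) (degree p) = 0"
    using assms(2,3) deg by (simp add: minpoly_in_def)
  moreover have "degree (p - q) \<le> degree p"
    using deg by (simp add: degree_diff_le)
  ultimately have "degree (p - q) < degree p"
    using \<open>q \<noteq> p\<close> by (metis le_neq_implies_less leading_coeff_0_iff right_minus_eq)
  moreover have "degree p \<le> degree (p - q)"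
    using assms \<open>q \<noteq> p\<close> by (simp add: minpoly_in_def polyx_diff lideal_diff)
  ultimately show False by simp
qed

subsection \<open>Matrix units and the modules S_n\<close>

definition munit :: "nat \<Rightarrow> nat \<Rightarrow> 'k::field R" where
  "munit i j = mon i j - mon (Suc i) (Suc j)"

lemma munit_single: "munit i j = Poly_Mapping.single (i,j) 1 - Poly_Mapping.single (Suc i, Suc j) 1"
  by (simp add: munit_def mon_def)

lemma mon_eq_jmult_mon: "mon i j = jmult (mon i 0) (mon 0 j)"
  by (simp add: mon_def jmult_single_single bmul_def)

lemma munit_eq_jmult_mon: "munit i j = jmult (mon i j) (munit j j)"
  by (simp add: munit_single mon_def jmult_diff_right jmult_single_single bmul_def)

lemma munit_diag_eq_jmult: "munit i i = jmult (munit i 0) (munit 0 i)"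
  by (simp add: munit_single jmult_diff_left jmult_diff_right jmult_single_single bmul_def)

lemma sum_munit_diag: "(\<Sum>i<N. munit i i) = (mon 0 0 - mon N N :: 'k::field R)"
  unfolding munit_def by (rule sum_lessThan_telescope'[where f = "\<lambda>n. mon n n"])

lemma jmult_munit_polyx: "jmult (munit i k) (polyx p) = (\<Sum>m\<le>degree p. rscale (coeff p m) (munit i (k + m)))"
  unfolding polyx_def jmult_sum_right
  by (rule sum.cong) (simp_all add: munit_single jmult_diff_left jmult_diff_right jmult_single_single bmul_def rscale_def)

lemma jmult_munit_in_diag_kernel_upto: "jmult r (munit k k) \<in> diag_kernel_upto (Suc k)"
proof -
  have "jmult r (munit k k) = (\<Sum>p\<in>Poly_Mapping.keys r. Poly_Mapping.single (bmul p (k,k)) (Poly_Mapping.lookup r p)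
      - Poly_Mapping.single (bmul p (Suc k, Suc k)) (Poly_Mapping.lookup r p))"
    by (simp add: munit_single jmult_diff_right jmult_single_right sum_subtractf)
  also have "\<dots> \<in> diag_kernel_upto (Suc k)"
    by (intro diag_kernel_upto_sum single_diff_single_in_diag_kernel_upto)
       (auto simp: bmul_def diag_def split: prod.splits)
  finally show ?thesis .
qed

lemma fn_eq_munit: "n \<ge> 1 \<Longrightarrow> fn n = munit (n - 1) (n - 1)"
  by (simp add: fn_def munit_def)

lemma Ssum_subset_diag_kernel_upto: "Ssum d \<subseteq> diag_kernel_upto d"
proof
  fix u assume "u \<in> Ssum d"
  then obtain s where s: "u = (\<Sum>n\<in>{1..d}. s n)" "\<forall>n\<in>{1..d}. s n \<in> Sn n"
    unfolding Ssum_def by blast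
  have "s n \<in> diag_kernel_upto d" if "n \<in> {1..d}" for n
  proof -
    have "s n \<in> lprinc (munit (n - 1) (n - 1))"
      using s(2) that by (simp add: Sn_def fn_eq_munit)
    then obtain r where "s n = jmult r (munit (n - 1) (n - 1))"
      unfolding lprinc_def by blast
    then have "s n \<in> diag_kernel_upto n"
      using jmult_munit_in_diag_kernel_upto[of r "n - 1"] that by simp
    then show ?thesis using that by (auto intro: diag_kernel_upto_mono)
  qed
  then show "u \<in> diag_kernel_upto d" unfolding s(1) by (rule diag_kernel_upto_sum)
qed

lemma Ssum_lideal: "lideal (Ssum d :: 'k::field R set)"
  unfolding lideal_def
proof (intro conjI ballI allI)
  show "0 \<in> Ssum d"
    unfolding Ssum_def Sn_def using lideal_0[OF lprinc_lideal] by (force intro: exI[of _ "\<lambda>_. 0"])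
next
  fix u v :: "'k R" assume "u \<in> Ssum d" "v \<in> Ssum d"
  then obtain s t where st: "u = (\<Sum>n\<in>{1..d}. s n)" "\<forall>n\<in>{1..d}. s n \<in> Sn n"
    "v = (\<Sum>n\<in>{1..d}. t n)" "\<forall>n\<in>{1..d}. t n \<in> Sn n" unfolding Ssum_def by blast
  moreover have "\<forall>n\<in>{1..d}. s n + t n \<in> Sn n"
    using st by (simp add: Sn_def lideal_add[OF lprinc_lideal])
  ultimately show "u + v \<in> Ssum d"
    unfolding Ssum_def using st by (intro CollectI exI[of _ "\<lambda>n. s n + t n"]) (simp add: sum.distrib)
next
  fix r u :: "'k R" assume "u \<in> Ssum d"
  then obtain s where s: "u = (\<Sum>n\<in>{1..d}. s n)" "\<forall>n\<in>{1..d}. s n \<in> Sn n"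
    unfolding Ssum_def by blast
  moreover have "\<forall>n\<in>{1..d}. jmult r (s n) \<in> Sn n"
    using s by (simp add: Sn_def lideal_mult[OF lprinc_lideal])
  ultimately show "jmult r u \<in> Ssum d"
    unfolding Ssum_def using s by (intro CollectI exI[of _ "\<lambda>n. jmult r (s n)"]) (simp add: jmult_sum_right)
qed

lemma munit_in_Ssum: "j < d \<Longrightarrow> munit i j \<in> Ssum d"
proof -
  assume j: "j < d"
  define s where "s = (\<lambda>n. if n = Suc j then munit i j else (0::'a R))"
  have "s n \<in> Sn n" for n
    using munit_eq_jmult_mon[of i j] lideal_0[OF lprinc_lideal]
    by (auto simp: s_def Sn_def lprinc_def fn_eq_munit)
  moreover have "(\<Sum>n\<in>{1..d}. s n) = munit i j"
    unfolding s_def using j by (subst sum.delta) auto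
  ultimately show ?thesis unfolding Ssum_def by (intro CollectI exI[of _ s]) auto
qed

subsection \<open>The socle is spanned by the matrix units\<close>

lemma diag_kernel_cancel_interior_key:
  fixes a :: "'k::field R"
  assumes a: "a \<in> diag_kernel" and ij: "(i,j) \<in> Poly_Mapping.keys a" "i \<ge> 1" "j \<ge> 1"
  defines "a' \<equiv> a + rscale (Poly_Mapping.lookup a (i,j)) (munit (i - 1) (j - 1))"
  shows "a' \<in> diag_kernel"
    and "(\<Sum>q\<in>Poly_Mapping.keys a'. fst q + snd q + 1) < (\<Sum>q\<in>Poly_Mapping.keys a. fst q + snd q + 1)"
proof -
  define u where "u = (munit (i - 1) (j - 1) :: 'k R)"
  have a': "a' = a + rscale (Poly_Mapping.lookup a (i,j)) u" by (simp add: a'_def u_def)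
  have u: "u = Poly_Mapping.single (i - 1, j - 1) 1 - Poly_Mapping.single (i, j) 1"
    using ij by (simp add: u_def munit_single)
  have "u \<in> diag_kernel_upto j"
    unfolding u by (rule single_diff_single_in_diag_kernel_upto) (use ij in \<open>auto simp: diag_def\<close>)
  then show "a' \<in> diag_kernel"
    unfolding a' using a by (intro diag_kernel_add diag_kernel_rscale) (simp_all add: diag_kernel_upto_def)
  have "Poly_Mapping.lookup a' (i,j) = 0"
    using ij by (simp add: a' u lookup_add lookup_minus lookup_single)
  have keys: "Poly_Mapping.keys a' \<subseteq> insert (i - 1, j - 1) (Poly_Mapping.keys a - {(i,j)})"
  proof
    fix q assume q: "q \<in> Poly_Mapping.keys a'"
    then have "q \<noteq> (i,j)" "Poly_Mapping.lookup a' q \<noteq> 0"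
      using \<open>Poly_Mapping.lookup a' (i,j) = 0\<close> by (auto simp: in_keys_iff)
    then show "q \<in> insert (i - 1, j - 1) (Poly_Mapping.keys a - {(i,j)})"
      by (auto simp: a' u lookup_add lookup_minus lookup_single in_keys_iff when_def split: if_splits)
  qed
  have "(\<Sum>q\<in>Poly_Mapping.keys a'. fst q + snd q + 1)
      \<le> (\<Sum>q\<in>insert (i - 1, j - 1) (Poly_Mapping.keys a - {(i,j)}). fst q + snd q + 1)"
    by (rule sum_mono2[OF _ keys]) auto
  also have "\<dots> \<le> (i - 1 + (j - 1) + 1) + (\<Sum>q\<in>Poly_Mapping.keys a - {(i,j)}. fst q + snd q + 1)"
    by (simp add: sum.insert_if)
  also have "\<dots> < (\<Sum>q\<in>Poly_Mapping.keys a. fst q + snd q + 1)"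
    using ij by (simp add: sum.remove)
  finally show "(\<Sum>q\<in>Poly_Mapping.keys a'. fst q + snd q + 1) < (\<Sum>q\<in>Poly_Mapping.keys a. fst q + snd q + 1)" .
qed

lemma diag_kernel_subset_lideal:
  fixes Y :: "'k::field R set"
  assumes Y: "lideal Y" and units: "\<And>i j. munit i j \<in> Y"
  shows "diag_kernel \<subseteq> Y"
proof
  fix a :: "'k R" assume "a \<in> diag_kernel"
  then show "a \<in> Y"
  proof (induction "\<Sum>q\<in>Poly_Mapping.keys a. fst q + snd q + 1" arbitrary: a rule: less_induct)
    case less
    show ?case
    proof (cases "a = 0")
      case True
      then show ?thesis using lideal_0[OF Y] by simp
    next
      case False
      then obtain i j where ij: "(i,j) \<in> Poly_Mapping.keys a" "i \<ge> 1" "j \<ge> 1"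
        using diag_kernel_has_interior_key[OF less.prems] by auto
      let ?u = "munit (i - 1) (j - 1)" and ?c = "Poly_Mapping.lookup a (i,j)"
      have "a + rscale ?c ?u \<in> Y"
        using less.hyps diag_kernel_cancel_interior_key[OF less.prems ij] by blast
      then have "a + rscale ?c ?u - rscale ?c ?u \<in> Y"
        using Y units by (intro lideal_diff lideal_rscale)
      then show ?thesis by simp
    qed
  qed
qed

lemma munit_in_lsum_Ssum_lprinc:
  assumes monic: "lead_coeff p = 1"
  shows "munit i j \<in> lsum (Ssum (degree p)) (lprinc (polyx p))"
proof (induction j arbitrary: i rule: less_induct)
  case (less j)
  let ?d = "degree p" and ?Y = "lsum (Ssum (degree p)) (lprinc (polyx p))"
  have Y: "lideal ?Y" by (intro lsum_lideal Ssum_lideal lprinc_lideal)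
  show ?case
  proof (cases "j < ?d")
    case True
    have "munit i j = munit i j + 0" by simp
    then show ?thesis
      unfolding lsum_def using munit_in_Ssum[OF True] lideal_0[OF lprinc_lideal] by blast
  next
    case False
    define k where "k = j - ?d"
    have j: "j = k + ?d" using False by (simp add: k_def)
    have "jmult (munit i k) (polyx p) = (\<Sum>m<?d. rscale (coeff p m) (munit i (k + m))) + munit i j"
      by (simp add: jmult_munit_polyx lessThan_Suc_atMost[symmetric] monic j)
    then have eq: "munit i j = jmult (munit i k) (polyx p) - (\<Sum>m<?d. rscale (coeff p m) (munit i (k + m)))"
      by (simp add: algebra_simps)
    have "jmult (munit i k) (polyx p) = 0 + jmult (munit i k) (polyx p)" by simp
    then have "jmult (munit i k) (polyx p) \<in> ?Y"
      unfolding lsum_def lprinc_def using lideal_0[OF Ssum_lideal] by blast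
    moreover have "(\<Sum>m<?d. rscale (coeff p m) (munit i (k + m))) \<in> ?Y"
    proof (rule lideal_sum[OF Y])
      fix m assume "m \<in> {..<?d}"
      then have "k + m < j" using j by simp
      then show "rscale (coeff p m) (munit i (k + m)) \<in> ?Y" by (intro lideal_rscale[OF Y] less)
    qed
    ultimately show ?thesis unfolding eq by (rule lideal_diff[OF Y])
  qed
qed

subsection \<open>The case H \<subseteq> I\<close>

lemma jmult_munit_0_0_right:
  "jmult r (munit 0 0) = (\<Sum>q\<in>{q \<in> Poly_Mapping.keys r. snd q = 0}.
      Poly_Mapping.single (fst q, 0) (Poly_Mapping.lookup r q) - Poly_Mapping.single (Suc (fst q), 1) (Poly_Mapping.lookup r q))"
proof -
  have "jmult r (munit 0 0) = (\<Sum>q\<in>Poly_Mapping.keys r. Poly_Mapping.single (bmul q (0,0)) (Poly_Mapping.lookup r q)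
      - Poly_Mapping.single (bmul q (1,1)) (Poly_Mapping.lookup r q))"
    by (simp add: munit_single jmult_diff_right jmult_single_right sum_subtractf)
  also have "\<dots> = (\<Sum>q\<in>{q \<in> Poly_Mapping.keys r. snd q = 0}.
      Poly_Mapping.single (fst q, 0) (Poly_Mapping.lookup r q) - Poly_Mapping.single (Suc (fst q), 1) (Poly_Mapping.lookup r q))"
    by (rule sum.mono_neutral_cong_right) (auto simp: bmul_def not_le split: prod.splits)
  finally show ?thesis .
qed

lemma munit_0_0_in_lprinc:
  assumes "u \<in> lprinc (munit 0 0)" "u \<noteq> (0::'k::field R)"
  shows "munit 0 0 \<in> lprinc u"
proof -
  obtain r where r: "u = jmult r (munit 0 0)" using assms(1) unfolding lprinc_def by blast
  define K where "K = {q \<in> Poly_Mapping.keys r. snd q = 0}"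
  define T where "T = (\<lambda>q. Poly_Mapping.single (fst q, 0) (Poly_Mapping.lookup r q)
       - Poly_Mapping.single (Suc (fst q), 1) (Poly_Mapping.lookup r q) :: 'k R)"
  have u: "u = (\<Sum>q\<in>K. T q)" unfolding r K_def T_def by (rule jmult_munit_0_0_right)
  have finK: "finite K" by (simp add: K_def)
  have "K \<noteq> {}" using u assms(2) by auto
  define a where "a = Max (fst ` K)"
  have "a \<in> fst ` K" unfolding a_def using finK \<open>K \<noteq> {}\<close> by (intro Max_in) auto
  then have a0K: "(a,0) \<in> K" by (force simp: K_def)
  have below_a: "fst q \<le> a" if "q \<in> K" for q unfolding a_def using finK that by (intro Max_ge) auto
  define c where "c = Poly_Mapping.lookup r (a,0)"
  have "c \<noteq> 0" using a0K by (simp add: K_def c_def in_keys_iff)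
  text \<open>Left multiplication by x^a kills every term of u with a smaller row.\<close>
  have "jmult (Poly_Mapping.single (0,a) (inverse c)) (T q) = (if q = (a,0) then munit 0 0 else 0)"
    if "q \<in> K" for q
  proof (cases "q = (a,0)")
    case True
    then have "T q = Poly_Mapping.single (a,0) c - Poly_Mapping.single (Suc a, 1) c"
      by (simp add: T_def c_def)
    then show ?thesis using True \<open>c \<noteq> 0\<close>
      by (simp add: jmult_diff_right jmult_single_single bmul_def munit_single)
  next
    case False
    have "fst q \<le> a" "snd q = 0" using that below_a by (auto simp: K_def)
    with False have "fst q < a" by (cases q) auto
    then show ?thesis
      using False by (simp add: T_def jmult_diff_right jmult_single_single bmul_def Suc_diff_Suc)
  qed
  then have "jmult (Poly_Mapping.single (0,a) (inverse c)) u = (\<Sum>q\<in>K. if q = (a,0) then munit 0 0 else 0)"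
    unfolding u jmult_sum_right by (intro sum.cong) auto
  also have "\<dots> = munit 0 0" using a0K finK by (simp add: sum.delta)
  finally show ?thesis
    unfolding lprinc_def by (intro CollectI exI[of _ "Poly_Mapping.single (0,a) (inverse c)"]) simp
qed

lemma simple_lideal_lprinc_munit:
  assumes "jmult (munit i 0) w \<noteq> (0::'k::field R)"
  shows "simple_lideal (lprinc (jmult (munit i 0) w))"
  unfolding simple_lideal_def
proof (intro conjI allI impI)
  let ?g = "jmult (munit i 0) w"
  show "lideal (lprinc ?g)" by (rule lprinc_lideal)
  show "lprinc ?g \<noteq> {0}" using mem_lprinc_self[of ?g] assms by blast
  fix T assume T: "lideal T \<and> T \<subseteq> lprinc ?g"
  show "T = {0} \<or> T = lprinc ?g"
  proof (cases "T = {0}")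
    case False
    then obtain t where t: "t \<in> T" "t \<noteq> 0" using T lideal_0 by blast
    obtain r where r: "t = jmult r ?g" using t T unfolding lprinc_def by blast
    define u where "u = jmult (jmult r (mon i 0)) (munit 0 0)"
    have tu: "t = jmult u w"
      by (simp only: r u_def munit_eq_jmult_mon[of i 0] jmult_assoc)
    have "u \<in> lprinc (munit 0 0)" "u \<noteq> 0" using tu t(2) unfolding u_def lprinc_def by auto
    then have "munit 0 0 \<in> lprinc u" by (rule munit_0_0_in_lprinc)
    then obtain r' where r': "jmult r' u = munit 0 0" by (auto simp: lprinc_def)
    have "jmult (jmult (mon i 0) r') t = jmult (mon i 0) (jmult (jmult r' u) w)"
      by (simp add: tu jmult_assoc)
    also have "\<dots> = jmult (mon i 0) (jmult (munit 0 0) w)"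
      by (simp only: r')
    also have "\<dots> = ?g"
      by (simp only: munit_eq_jmult_mon[of i 0] jmult_assoc)
    finally have "?g \<in> T" using T t(1) by (metis lideal_mult)
    then show ?thesis using T lprinc_subset by blast
  qed simp
qed

lemma semisimpleI:
  fixes H :: "'k::field R set"
  assumes H: "lideal H"
    and decomp: "\<And>h. h \<in> H \<Longrightarrow> \<exists>n::nat. \<exists>g. (\<forall>i<n. g i \<in> H \<and> (g i \<noteq> 0 \<longrightarrow> simple_lideal (lprinc (g i))))
                                  \<and> h = (\<Sum>i<n. g i)"
  shows "semisimple H"
  unfolding semisimple_def
proof (intro conjI ballI H)
  fix h assume "h \<in> H"
  then obtain n and g :: "nat \<Rightarrow> 'k R" where g: "\<forall>i<n. g i \<in> H \<and> (g i \<noteq> 0 \<longrightarrow> simple_lideal (lprinc (g i)))"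
    and h: "h = (\<Sum>i<n. g i)" using decomp by blast
  show "\<exists>(n::nat) g S. (\<forall>i<n. simple_lideal (S i) \<and> S i \<subseteq> H \<and> g i \<in> S i) \<and> h = (\<Sum>i<n. g i)"
  proof (cases "\<exists>i<n. g i \<noteq> 0")
    case True
    text \<open>Zero summands are placed in an arbitrary simple summand.\<close>
    then obtain i0 where i0: "i0 < n" "g i0 \<noteq> 0" by blast
    define S where "S i = lprinc (g (if g i = 0 then i0 else i))" for i
    have "\<forall>i<n. simple_lideal (S i) \<and> S i \<subseteq> H \<and> g i \<in> S i"
      using g i0 H lideal_0[OF lprinc_lideal] by (auto simp: S_def lprinc_subset mem_lprinc_self)
    then show ?thesis using h by blast
  next
    case False
    then show ?thesis using h by (intro exI[of _ 0]) auto
  qed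
qed

lemma diag_kernel_decomp:
  assumes "h \<in> diag_kernel"
  shows "h = (\<Sum>i<row_bound h. jmult (munit i 0) (jmult (munit 0 i) h))"
proof -
  let ?N = "row_bound h"
  have "(\<Sum>i<?N. jmult (munit i 0) (jmult (munit 0 i) h)) = jmult (\<Sum>i<?N. munit i i) h"
    unfolding jmult_sum_left by (simp only: munit_diag_eq_jmult jmult_assoc)
  also have "\<dots> = h - jmult (mon ?N 0) (jmult (mon 0 ?N) h)"
    by (simp add: sum_munit_diag jmult_diff_left mon_eq_jmult_mon[of ?N ?N] jmult_assoc)
  also have "\<dots> = h"
    by (simp add: jmult_xpow_diag_kernel_eq_0[OF _ assms] fst_le_row_bound)
  finally show ?thesis by simp
qed

lemma semisimple_if_subset_diag_kernel:
  assumes H: "lideal H" and "H \<subseteq> diag_kernel"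
  shows "semisimple H"
proof (rule semisimpleI[OF H])
  fix h assume h: "h \<in> H"
  define g where "g i = jmult (munit i 0) (jmult (munit 0 i) h)" for i
  have "\<forall>i<row_bound h. g i \<in> H \<and> (g i \<noteq> 0 \<longrightarrow> simple_lideal (lprinc (g i)))"
    using H h by (auto simp: g_def lideal_mult simple_lideal_lprinc_munit)
  moreover have "h = (\<Sum>i<row_bound h. g i)"
    unfolding g_def using assms(2) h by (intro diag_kernel_decomp) auto
  ultimately show "\<exists>n::nat. \<exists>g. (\<forall>i<n. g i \<in> H \<and> (g i \<noteq> 0 \<longrightarrow> simple_lideal (lprinc (g i)))) \<and> h = (\<Sum>i<n. g i)"
    by blast
qed

lemma subset_socle_if_subset_diag_kernel:
  fixes H :: "'k::field R set"
  assumes "H \<subseteq> diag_kernel"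
  shows "H \<subseteq> socle"
  unfolding socle_def
proof (intro subsetI InterI)
  fix h and J :: "'k R set"
  assume h: "h \<in> H" and "J \<in> {J. tideal J \<and> mon 0 0 - mon 1 1 \<in> J}"
  then have J: "lideal J" "\<And>a r. a \<in> J \<Longrightarrow> jmult a r \<in> J" "munit 0 0 \<in> J"
    by (auto simp: tideal_def munit_def)
  have "jmult (munit i 0) (jmult (munit 0 i) h) \<in> J" for i
  proof -
    have "jmult (munit i 0) (jmult (munit 0 i) h) = jmult (mon i 0) (jmult (munit 0 0) (jmult (munit 0 i) h))"
      by (simp add: munit_eq_jmult_mon[of i 0] jmult_assoc)
    then show ?thesis using J by (simp add: lideal_mult)
  qed
  then have "(\<Sum>i<row_bound h. jmult (munit i 0) (jmult (munit 0 i) h)) \<in> J"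
    by (rule lideal_sum[OF J(1)])
  then show "h \<in> J"
    using diag_kernel_decomp[of h] assms h by auto
qed

subsection \<open>The case H \<nsubseteq> I\<close>

lemma lprinc_polyx_subset_diag_kernel:
  assumes "p \<noteq> 0" "jmult r (polyx p) \<in> diag_kernel"
  shows "r \<in> diag_kernel"
proof -
  define N where "N = row_bound r + row_bound (jmult r (polyx p))"
  have rows_r: "\<forall>q\<in>Poly_Mapping.keys r. fst q \<le> N"
    and rows_rp: "\<forall>q\<in>Poly_Mapping.keys (jmult r (polyx p)). fst q \<le> N"
    using fst_le_row_bound by (force simp: N_def)+
  obtain w where w: "jmult (mon 0 N) r = polyx w" using jmult_xpow_eq_polyx[OF rows_r] .
  have "polyx (w * p) = jmult (mon 0 N) (jmult r (polyx p))"
    by (simp add: polyx_mult w flip: jmult_assoc)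
  also have "\<dots> = 0" using jmult_xpow_diag_kernel_eq_0[OF rows_rp assms(2)] .
  finally have "jmult (mon 0 N) r = 0" using assms(1) w by simp
  then show ?thesis
    unfolding diag_kernel_def using diag_coeff_jmult_mon[OF rows_r, of "_ + int N" 0] by simp
qed

lemma lookup_jmult_polyx_top_column:
  assumes "\<forall>q\<in>Poly_Mapping.keys r. snd q \<le> J" "(i,J) \<in> Poly_Mapping.keys r"
  shows "Poly_Mapping.lookup (jmult r (polyx p)) (i, J + degree p) = Poly_Mapping.lookup r (i,J) * lead_coeff p"
proof -
  let ?d = "degree p" and ?r = "Poly_Mapping.lookup r"
  have "jmult r (polyx p) = (\<Sum>m\<le>?d. \<Sum>q\<in>Poly_Mapping.keys r. Poly_Mapping.single (fst q, snd q + m) (?r q * coeff p m))"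
    unfolding polyx_def jmult_sum_right jmult_single_right
    by (intro sum.cong refl) (auto simp: bmul_def split: prod.splits)
  then have "Poly_Mapping.lookup (jmult r (polyx p)) (i, J + ?d) =
      (\<Sum>m\<le>?d. \<Sum>q\<in>Poly_Mapping.keys r. if (fst q, snd q + m) = (i, J + ?d) then ?r q * coeff p m else 0)"
    by (simp only: lookup_sum lookup_single when_def)
  also have "\<dots> = (\<Sum>m\<le>?d. if m = ?d then ?r (i,J) * coeff p m else 0)"
  proof (rule sum.cong[OF refl])
    fix m assume "m \<in> {..?d}"
    then have "(\<Sum>q\<in>Poly_Mapping.keys r. if (fst q, snd q + m) = (i, J + ?d) then ?r q * coeff p m else 0)
        = (\<Sum>q\<in>Poly_Mapping.keys r. if q = (i,J) then (if m = ?d then ?r q * coeff p m else 0) else 0)"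
      using assms(1) by (intro sum.cong refl) force
    also have "\<dots> = (if m = ?d then ?r (i,J) * coeff p m else 0)"
      using assms(2) by (simp add: sum.delta)
    finally show "(\<Sum>q\<in>Poly_Mapping.keys r. if (fst q, snd q + m) = (i, J + ?d) then ?r q * coeff p m else 0)
        = (if m = ?d then ?r (i,J) * coeff p m else 0)" .
  qed
  also have "\<dots> = ?r (i,J) * lead_coeff p" by simp
  finally show ?thesis .
qed

lemma lprinc_polyx_inter_diag_kernel_upto:
  assumes p0: "p \<noteq> 0" and u: "jmult r (polyx p) \<in> diag_kernel_upto (degree p)"
  shows "jmult r (polyx p) = 0"
proof (rule ccontr)
  assume "jmult r (polyx p) \<noteq> 0"
  then have "r \<noteq> 0" by auto
  moreover have "r \<in> diag_kernel"
    using lprinc_polyx_subset_diag_kernel[OF p0] u by (simp add: diag_kernel_upto_def)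
  ultimately obtain q1 where q1: "q1 \<in> Poly_Mapping.keys r" "snd q1 \<ge> 1"
    using diag_kernel_has_interior_key by blast
  define J where "J = Max (snd ` Poly_Mapping.keys r)"
  have "J \<in> snd ` Poly_Mapping.keys r" unfolding J_def using q1(1) by (intro Max_in) auto
  then obtain i where iJ: "(i,J) \<in> Poly_Mapping.keys r" by force
  have below_J: "\<forall>q\<in>Poly_Mapping.keys r. snd q \<le> J" by (simp add: J_def)
  then have "J \<ge> 1" using q1 by force
  have "Poly_Mapping.lookup (jmult r (polyx p)) (i, J + degree p) \<noteq> 0"
    using iJ p0 by (simp add: lookup_jmult_polyx_top_column[OF below_J iJ] in_keys_iff)
  then have "J + degree p \<le> degree p" using u by (force simp: diag_kernel_upto_def in_keys_iff)
  then show False using \<open>J \<ge> 1\<close> by simp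
qed

lemma Ssum_inter_lprinc_polyx:
  "p \<noteq> 0 \<Longrightarrow> Ssum (degree p) \<inter> lprinc (polyx p) = {0}"
  using lprinc_polyx_inter_diag_kernel_upto Ssum_subset_diag_kernel_upto
    lideal_0[OF Ssum_lideal] lideal_0[OF lprinc_lideal]
  by (fastforce simp: lprinc_def)

lemma lideal_eq_lsum_Ssum_lprinc:
  assumes H: "lideal H" and p: "minpoly_in H p"
  shows "H = lsum (H \<inter> Ssum (degree p)) (lprinc (polyx p))"
proof (intro set_eqI iffI)
  have pH: "polyx p \<in> H" and monic: "lead_coeff p = 1" using p by (auto simp: minpoly_in_def)
  fix h assume h: "h \<in> H"
  let ?N = "row_bound h"
  have rows: "\<forall>q\<in>Poly_Mapping.keys h. fst q \<le> ?N" by (simp add: fst_le_row_bound)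
  obtain v where v: "jmult (mon 0 ?N) h = polyx v" using jmult_xpow_eq_polyx[OF rows] .
  obtain w where "v = w * p" using minpoly_in_dvd[OF H p] lideal_mult[OF H h] v by (metis dvdE mult.commute)
  then have top: "jmult (mon ?N ?N) h = jmult (jmult (mon ?N 0) (polyx w)) (polyx p)"
    by (simp add: mon_eq_jmult_mon[of ?N ?N] jmult_assoc v polyx_mult)
  have "h - jmult (mon ?N ?N) h \<in> lsum (Ssum (degree p)) (lprinc (polyx p))"
    using diag_kernel_subset_lideal[OF lsum_lideal[OF Ssum_lideal lprinc_lideal] munit_in_lsum_Ssum_lprinc[OF monic]]
      diff_jmult_mon_diag_kernel[OF rows] by blast
  then obtain t s where ts: "h - jmult (mon ?N ?N) h = t + jmult s (polyx p)" "t \<in> Ssum (degree p)"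
    unfolding lsum_def lprinc_def by blast
  have "t = h - jmult (mon ?N ?N) h - jmult s (polyx p)" using ts(1) by simp
  also have "\<dots> \<in> H" using H h pH by (intro lideal_diff lideal_mult)
  finally have "t \<in> H" .
  moreover have "h = t + jmult (s + jmult (mon ?N 0) (polyx w)) (polyx p)"
    using ts(1) by (simp add: jmult_add_left top algebra_simps)
  ultimately show "h \<in> lsum (H \<inter> Ssum (degree p)) (lprinc (polyx p))"
    unfolding lsum_def lprinc_def using ts(2) by blast
next
  fix h assume "h \<in> lsum (H \<inter> Ssum (degree p)) (lprinc (polyx p))"
  then show "h \<in> H"
    using H lprinc_subset[OF H] p by (auto simp: lsum_def minpoly_in_def intro: lideal_add)
qed

theorem theorem3:
  fixes H :: "((nat \<times> nat) \<Rightarrow>\<^sub>0 'k::field) set"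
  assumes "lideal H"
  shows "(semisimple H \<and> H \<subseteq> socle) \<or>
         (\<exists>p. minpoly_in H p \<and> (\<forall>q. minpoly_in H q \<longrightarrow> q = p) \<and>
            (\<exists>!\<Sigma>. lideal \<Sigma> \<and> \<Sigma> \<subseteq> Ssum (degree p) \<and> idirect H \<Sigma> (lprinc (polyx p))))"
proof (cases "H \<subseteq> diag_kernel")
  case True
  then show ?thesis
    using semisimple_if_subset_diag_kernel[OF assms] subset_socle_if_subset_diag_kernel by blast
next
  case False
  then obtain p where p: "minpoly_in H p"
    using lideal_has_polyx_if_not_subset_diag_kernel[OF assms] minpoly_in_exists[OF assms] by blast
  let ?S = "Ssum (degree p)" and ?P = "lprinc (polyx p)"
  have direct: "?S \<inter> ?P = {0}"
    by (rule Ssum_inter_lprinc_polyx) (use p in \<open>simp add: minpoly_in_def\<close>)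
  have "H = lsum (H \<inter> ?S) ?P" by (rule lideal_eq_lsum_Ssum_lprinc[OF assms p])
  moreover have "H \<inter> ?S \<inter> ?P = {0}" using direct lideal_0[OF assms] by blast
  ultimately have "idirect H (H \<inter> ?S) ?P" unfolding idirect_iff_lsum by (rule conjI)
  moreover have "\<Sigma> = H \<inter> ?S" if "lideal \<Sigma> \<and> \<Sigma> \<subseteq> ?S \<and> idirect H \<Sigma> ?P" for \<Sigma>
    using idirect_complement_unique[OF _ _ Ssum_lideal direct lideal_0[OF lprinc_lideal]] that by blast
  ultimately have "\<exists>!\<Sigma>. lideal \<Sigma> \<and> \<Sigma> \<subseteq> ?S \<and> idirect H \<Sigma> ?P"
    using lideal_Int[OF assms Ssum_lideal] by (intro ex1I[of _ "H \<inter> ?S"]) auto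
  then show ?thesis
    using p minpoly_in_unique[OF assms p] by (intro disjI2 exI[of _ p] conjI allI impI)
qed

end
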